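(* Let $i_1,\dots,i_m\in\mathcal{C}l_{0,m}$ with $i_k^2=-1$ for all $k$, let $0\le\mu\le m$, $F_1=\{i_1,\dots,i_\mu\}$, $F_2=\{i_{\mu+1},\dots,i_m\}$, and let $\mathcal{F}_{F_1,F_2}$ be the geometric Fourier transform defined in the context. Then for all $j_1,\dots,j_m\in\mathbb{N}$, \[ \mathcal{F}_{F_1,F_2}(\psi_{j_1,\dots,j_m})=\left(\prod_{k=1}^{\mu}(-i_k)^{j_k}\right)\psi_{j_1,\dots,j_m}\left(\prod_{k=\mu+1}^{m}(-i_k)^{j_k}\right), \] so the basis $\{\psi_{j_1,\dots,j_m}\}$ of $\mathcal{S}(\mathbb{R}^m)\otimes\mathcal{C}l_{0,m}$ diagonalizes $\mathcal{F}_{F_1,F_2}$.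
   Context: $\mathcal{C}l_{0,m}$ is the real associative algebra generated by $e_1,\dots,e_m$ with $e_ie_j+e_je_i=0$ ($i\ne j$), $e_i^2=-1$. For $f:\mathbb{R}^m\to\mathcal{C}l_{0,m}$, $\mathcal{F}_{F_1,F_2}(f)(u)=(2\pi)^{-m/2}\int_{\mathbb{R}^m}\left(\prod_{k=1}^{\mu}e^{-i_kx_ku_k}\right)f(x)\left(\prod_{k=\mu+1}^{m}e^{-i_kx_ku_k}\right)dx$, products taken in increasing order of $k$. The one-dimensional Hermite functions are $\psi_k(x)=(x-\frac{d}{dx})^ke^{-x^2/2}=H_k(x)e^{-x^2/2}$, and $\psi_{j_1,\dots,j_m}(x)=\psi_{j_1}(x_1)\cdots\psi_{j_m}(x_m)$. *)

theory Defs
  imports "HOL-Analysis.Analysis"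
begin

text \<open>An element of Cl_{0,m} is represented by its coordinates with respect to the
basis blades e_A = e_{a_1} ... e_{a_k} (a_1 < ... < a_k), A a subset of {1..m}.\<close>

type_synonym clif = "nat set \<Rightarrow> real"

definition cl :: "nat \<Rightarrow> clif set" where
  "cl m = {x. \<forall>A. x A \<noteq> 0 \<longrightarrow> A \<subseteq> {1..m}}"

text \<open>Sign of e_A e_B = sign A B * e_{A symmetric-difference B}, using
e_i e_j = - e_j e_i (i ~= j) and e_i^2 = -1.\<close>
definition blade_sign :: "nat set \<Rightarrow> nat set \<Rightarrow> real" where
  "blade_sign A B = (-1) ^ (card {(a, b). a \<in> A \<and> b \<in> B \<and> b < a} + card (A \<inter> B))"

definition clmul :: "nat \<Rightarrow> clif \<Rightarrow> clif \<Rightarrow> clif" where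
  "clmul m x y = (\<lambda>C. \<Sum>A\<in>Pow {1..m}. \<Sum>B\<in>Pow {1..m}.
      if (A - B) \<union> (B - A) = C then blade_sign A B * x A * y B else 0)"

definition cl_one :: clif where
  "cl_one = (\<lambda>A. if A = {} then 1 else 0)"

definition cl_scalar :: "real \<Rightarrow> clif" where
  "cl_scalar r = (\<lambda>A. if A = {} then r else 0)"

definition cl_neg :: "clif \<Rightarrow> clif" where
  "cl_neg x = (\<lambda>A. - x A)"

fun cl_pow :: "nat \<Rightarrow> clif \<Rightarrow> nat \<Rightarrow> clif" where
  "cl_pow m a 0 = cl_one"
| "cl_pow m a (Suc n) = clmul m a (cl_pow m a n)"

definition cl_exp :: "nat \<Rightarrow> clif \<Rightarrow> clif" where
  "cl_exp m a = (\<lambda>C. \<Sum>n. cl_pow m a n C / fact n)"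

definition cl_prod :: "nat \<Rightarrow> (nat \<Rightarrow> clif) \<Rightarrow> nat list \<Rightarrow> clif" where
  "cl_prod m g ks = foldr (\<lambda>k acc. clmul m (g k) acc) ks cl_one"

text \<open>Points of R^m are functions x :: nat => real, coordinates x 1, ..., x m;
Lebesgue measure on R^m is the product measure of lborel over {1..m}.\<close>

definition lebesgue_m :: "nat \<Rightarrow> (nat \<Rightarrow> real) measure" where
  "lebesgue_m m = PiM {1..m} (\<lambda>_. lborel)"

definition cl_integral :: "nat \<Rightarrow> ((nat \<Rightarrow> real) \<Rightarrow> clif) \<Rightarrow> clif" where
  "cl_integral m F = (\<lambda>C. integral\<^sup>L (lebesgue_m m) (\<lambda>x. F x C))"

definition geom_FT ::
  "nat \<Rightarrow> nat \<Rightarrow> (nat \<Rightarrow> clif) \<Rightarrow> ((nat \<Rightarrow> real) \<Rightarrow> clif) \<Rightarrow> (nat \<Rightarrow> real) \<Rightarrow> clif" where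
  "geom_FT m \<mu> i f u =
     (\<lambda>C. (2 * pi) powr (- real m / 2) *
       cl_integral m (\<lambda>x.
         clmul m (cl_prod m (\<lambda>k. cl_exp m (clmul m (cl_scalar (- x k * u k)) (i k))) [1..<\<mu>+1])
           (clmul m (f x)
             (cl_prod m (\<lambda>k. cl_exp m (clmul m (cl_scalar (- x k * u k)) (i k))) [\<mu>+1..<m+1]))) C)"

definition hermite_fun :: "nat \<Rightarrow> real \<Rightarrow> real" where
  "hermite_fun k = ((\<lambda>g x. x * g x - deriv g x) ^^ k) (\<lambda>x. exp (- x\<^sup>2 / 2))"

definition hermite_multi :: "nat \<Rightarrow> (nat \<Rightarrow> nat) \<Rightarrow> (nat \<Rightarrow> real) \<Rightarrow> real" where
  "hermite_multi m j x = (\<Prod>k\<in>{1..m}. hermite_fun (j k) (x k))"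

end

theory Submission
  imports Defs "HOL-Probability.Characteristic_Functions" "HOL-Computational_Algebra.Polynomial"
    "HOL-Real_Asymp.Real_Asymp"
begin

text \<open>
  The kernel factors exp(-i_k x_k u_k) and the powers (-i_k)^j all lie in the subalgebras
  R + R i_k, each a copy of the complex numbers because i_k^2 = -1.  Multiplying out the ordered
  products, both sides become sums, over S \<subseteq> {1..\<mu>} and T \<subseteq> {\<mu>+1..m}, of real multiples of the
  fixed elements (\<Prod>k\<in>S. i_k)(\<Prod>k\<in>T. i_k), whose coefficients are products of real or imaginary
  parts.  By Fubini the coefficients on the left factor into one-dimensional integrals, namely the
  real and imaginary parts of the classical identity
  \<integral> \<psi>_j(t) e^(-itu) dt = sqrt(2\<pi>) (-i)^j \<psi>_j(u).
  That identity follows by induction from the three-term recurrence of the Hermite polynomials,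
  an integration by parts against the Gaussian, and the characteristic function of the standard
  normal distribution.
\<close>

section \<open>Hermite functions and their Fourier transform\<close>

fun hermite_poly :: "nat \<Rightarrow> real poly" where
  "hermite_poly 0 = 1"
| "hermite_poly (Suc k) = [:0, 2:] * hermite_poly k - pderiv (hermite_poly k)"

definition gaussian :: "real \<Rightarrow> real" where
  "gaussian t = exp (- t\<^sup>2 / 2)"

lemma pderiv_hermite_poly: "pderiv (hermite_poly (Suc k)) = smult (2 * Suc k) (hermite_poly k)"
proof (induction k)
  case 0
  then show ?case by (simp add: pderiv_pCons)
next
  case (Suc k)
  have "pderiv (hermite_poly (Suc (Suc k))) =
      smult 2 (hermite_poly (Suc k)) + [:0, 2:] * pderiv (hermite_poly (Suc k))
        - pderiv (pderiv (hermite_poly (Suc k)))"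
    unfolding hermite_poly.simps(2)[of "Suc k"]
    by (simp add: pderiv_mult pderiv_diff pderiv_pCons pderiv_smult del: hermite_poly.simps)
  also have "\<dots> = smult 2 (hermite_poly (Suc k))
      + smult (2 * Suc k) ([:0, 2:] * hermite_poly k - pderiv (hermite_poly k))"
    by (simp add: Suc pderiv_smult smult_diff_right del: hermite_poly.simps)
  also have "\<dots> = smult (2 * Suc (Suc k)) (hermite_poly (Suc k))"
    by (simp only: hermite_poly.simps(2)[of k, symmetric] smult_add_left[symmetric]) simp
  finally show ?case .
qed

text \<open>The recurrence is written with p' - x p, the polynomial part of (p \<cdot> gaussian)', whose
  Fourier transform is computed by integration by parts.\<close>

lemma hermite_poly_Suc_Suc:
  "hermite_poly (Suc (Suc k)) =
     smult (2 * Suc k) (hermite_poly k) - smult 2 (pderiv (hermite_poly (Suc k)) - [:0, 1:] * hermite_poly (Suc k))"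
  unfolding hermite_poly.simps(2)[of "Suc k"] pderiv_hermite_poly
  by (rule poly_eq_poly_eq_iff[THEN iffD1], rule ext) (simp add: algebra_simps)

lemma has_real_derivative_poly_gaussian:
  "((\<lambda>t. poly p t * gaussian t) has_real_derivative poly (pderiv p - [:0, 1:] * p) x * gaussian x) (at x)"
  unfolding gaussian_def
  by (auto intro!: derivative_eq_intros simp: algebra_simps power2_eq_square)

lemma hermite_fun_eq_poly_gaussian: "hermite_fun k t = poly (hermite_poly k) t * gaussian t"
proof (induction k arbitrary: t)
  case 0
  then show ?case by (simp add: hermite_fun_def gaussian_def)
next
  case (Suc k)
  have "hermite_fun (Suc k) t = t * hermite_fun k t - deriv (hermite_fun k) t"
    by (simp add: hermite_fun_def)
  also have "\<dots> = poly (hermite_poly (Suc k)) t * gaussian t"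
    unfolding Suc[abs_def] DERIV_imp_deriv[OF has_real_derivative_poly_gaussian]
    by (simp add: algebra_simps)
  finally show ?case .
qed

lemma hermite_fun_Suc_Suc:
  "hermite_fun (Suc (Suc k)) t = 2 * t * hermite_fun (Suc k) t - 2 * Suc k * hermite_fun k t"
  by (simp add: hermite_fun_eq_poly_gaussian hermite_poly_Suc_Suc pderiv_hermite_poly algebra_simps
      del: hermite_poly.simps)

lemma poly_gaussian_tendsto_0:
  "((\<lambda>t. poly p t * gaussian t) \<longlongrightarrow> 0) at_top" "((\<lambda>t. poly p t * gaussian t) \<longlongrightarrow> 0) at_bot"
proof -
  have monomials: "(\<lambda>t. poly p t * gaussian t) = (\<lambda>t. \<Sum>i\<le>degree p. coeff p i * (t ^ i * exp (- t\<^sup>2 / 2)))"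
    by (auto simp: poly_altdef sum_distrib_right mult.assoc gaussian_def)
  have "((\<lambda>t::real. t ^ i * exp (- t\<^sup>2 / 2)) \<longlongrightarrow> 0) at_top"
       "((\<lambda>t::real. t ^ i * exp (- t\<^sup>2 / 2)) \<longlongrightarrow> 0) at_bot" for i
    by real_asymp+
  then show "((\<lambda>t. poly p t * gaussian t) \<longlongrightarrow> 0) at_top" "((\<lambda>t. poly p t * gaussian t) \<longlongrightarrow> 0) at_bot"
    unfolding monomials by (auto intro!: tendsto_null_sum tendsto_mult_right_zero)
qed

lemma continuous_poly_gaussian: "continuous_on A (\<lambda>t. poly p t * gaussian t)"
  unfolding gaussian_def by (intro continuous_intros) auto

lemma integrable_poly_gaussian: "integrable lborel (\<lambda>t. poly p t * gaussian t)"
proof -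
  have "(\<lambda>t. poly p t * gaussian t) = (\<lambda>t. \<Sum>i\<le>degree p. (coeff p i * sqrt (2 * pi)) * (std_normal_density t * t ^ i))"
    by (auto simp: poly_altdef sum_distrib_right std_normal_density_def gaussian_def mult_ac sum_distrib_left)
  then show ?thesis
    by (auto intro!: integrable_sum integrable_mult_right integrable_std_normal_moment)
qed

lemma lborel_integral_derivative_eq_0:
  fixes F f :: "real \<Rightarrow> 'a::euclidean_space"
  assumes "\<And>t. (F has_vector_derivative f t) (at t)" and "continuous_on UNIV f" and "integrable lborel f"
    and "(F \<longlongrightarrow> 0) at_top" and "(F \<longlongrightarrow> 0) at_bot"
  shows "integral\<^sup>L lborel f = 0"
proof -
  have "(LBINT t=-\<infinity>..\<infinity>. f t) = 0 - 0"
    using assms by (intro interval_integral_FTC_integrable[where F=F])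
      (auto simp: set_integrable_def einterval_def ereal_tendsto_simps1 continuous_on_eq_continuous_at)
  then show ?thesis
    by (simp add: interval_lebesgue_integral_def einterval_def set_lebesgue_integral_def)
qed

definition poly_gaussian_fourier :: "real poly \<Rightarrow> real \<Rightarrow> complex" where
  "poly_gaussian_fourier p u = (CLINT t|lborel. (poly p t * gaussian t) *\<^sub>R cis (- (t * u)))"

lemma integrable_poly_gaussian_cis: "integrable lborel (\<lambda>t. (poly p t * gaussian t) *\<^sub>R cis (- (t * u)))"
proof (rule Bochner_Integration.integrable_bound[OF integrable_poly_gaussian[of p]])
  show "(\<lambda>t. (poly p t * gaussian t) *\<^sub>R cis (- (t * u))) \<in> borel_measurable lborel"
    by (simp add: borel_measurable_continuous_onI continuous_intros continuous_poly_gaussian)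
qed (simp add: norm_cis)

lemma poly_gaussian_fourier_diff:
  "poly_gaussian_fourier (p - q) u = poly_gaussian_fourier p u - poly_gaussian_fourier q u"
  unfolding poly_gaussian_fourier_def poly_diff left_diff_distrib scaleR_left_diff_distrib
  by (intro Bochner_Integration.integral_diff integrable_poly_gaussian_cis)

lemma poly_gaussian_fourier_smult: "poly_gaussian_fourier (smult c p) u = c * poly_gaussian_fourier p u"
  unfolding poly_gaussian_fourier_def
  by (subst integral_mult_right_zero[symmetric]) (simp add: scaleR_conv_of_real mult_ac)

lemma poly_gaussian_fourier_pderiv:
  "poly_gaussian_fourier (pderiv p - [:0, 1:] * p) u = \<i> * u * poly_gaussian_fourier p u"
proof -
  let ?F = "\<lambda>t. (poly p t * gaussian t) *\<^sub>R cis (- (t * u))"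
  let ?f = "\<lambda>t. (poly (pderiv p - [:0, 1:] * p) t * gaussian t) *\<^sub>R cis (- (t * u)) - \<i> * u * ?F t"
  have "integral\<^sup>L lborel ?f = 0"
  proof (rule lborel_integral_derivative_eq_0)
    show "(?F has_vector_derivative ?f t) (at t)" for t
    proof -
      have "((\<lambda>t. cis (- (t * u))) has_vector_derivative - \<i> * u * cis (- (t * u))) (at t)"
        unfolding has_vector_derivative_def
        by (auto intro!: derivative_eq_intros simp: scaleR_conv_of_real)
      from has_vector_derivative_scaleR[OF has_real_derivative_poly_gaussian[of p t] this]
      show ?thesis
        by (simp add: algebra_simps)
    qed
    show "continuous_on UNIV ?f"
      by (intro continuous_intros continuous_poly_gaussian)
    show "integrable lborel ?f"
      using integrable_poly_gaussian_cis by (intro Bochner_Integration.integrable_diff integrable_mult_right)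
    show "(?F \<longlongrightarrow> 0) at_top" "(?F \<longlongrightarrow> 0) at_bot"
      by (rule tendsto_norm_zero_cancel,
          simp only: norm_scaleR norm_cis mult_1_right tendsto_rabs_zero_iff poly_gaussian_tendsto_0)+
  qed
  moreover have "integral\<^sup>L lborel ?f =
      poly_gaussian_fourier (pderiv p - [:0, 1:] * p) u - \<i> * u * poly_gaussian_fourier p u"
    unfolding poly_gaussian_fourier_def
    by (simp only: Bochner_Integration.integral_diff[OF integrable_poly_gaussian_cis
          integrable_mult_right[OF integrable_poly_gaussian_cis]] integral_mult_right_zero)
  ultimately show ?thesis
    by simp
qed

lemma poly_gaussian_fourier_1: "poly_gaussian_fourier 1 u = sqrt (2 * pi) * gaussian u"
proof -
  have "(CLINT t|lborel. std_normal_density t *\<^sub>R cis (- (t * u))) = char std_normal_distribution (- u)"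
    unfolding char_def
    by (subst integral_density) (auto simp: normal_density_nonneg cis_conv_exp mult.commute
        intro!: borel_measurable_continuous_onI continuous_intros)
  also have "\<dots> = gaussian u"
    by (simp add: char_std_normal_distribution gaussian_def)
  finally have normal_char: "(CLINT t|lborel. std_normal_density t *\<^sub>R cis (- (t * u))) = gaussian u" .
  have "poly_gaussian_fourier 1 u = (CLINT t|lborel. sqrt (2 * pi) * (std_normal_density t *\<^sub>R cis (- (t * u))))"
    unfolding poly_gaussian_fourier_def
    by (intro Bochner_Integration.integral_cong) (simp_all add: std_normal_density_def gaussian_def scaleR_conv_of_real)
  also have "\<dots> = sqrt (2 * pi) * gaussian u"
    by (simp only: integral_mult_right_zero normal_char of_real_mult)
  finally show ?thesis .
qed

lemma poly_gaussian_fourier_hermite: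
  "poly_gaussian_fourier (hermite_poly k) u = sqrt (2 * pi) * (- \<i>) ^ k * hermite_fun k u"
proof (induction k rule: induct_nat_012)
  case 0
  then show ?case by (simp add: poly_gaussian_fourier_1 hermite_fun_eq_poly_gaussian)
next
  case 1
  have "hermite_poly (Suc 0) = smult (- 2) (pderiv (hermite_poly 0) - [:0, 1:] * hermite_poly 0)"
    by simp
  then show ?case
    by (simp only: poly_gaussian_fourier_smult poly_gaussian_fourier_pderiv)
      (simp add: poly_gaussian_fourier_1 hermite_fun_eq_poly_gaussian)
next
  case (ge2 k)
  have "poly_gaussian_fourier (hermite_poly (Suc (Suc k))) u =
      2 * Suc k * poly_gaussian_fourier (hermite_poly k) u
        - 2 * (\<i> * u * poly_gaussian_fourier (hermite_poly (Suc k)) u)"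
    by (simp only: hermite_poly_Suc_Suc poly_gaussian_fourier_diff[of "smult _ _"]
        poly_gaussian_fourier_smult poly_gaussian_fourier_pderiv) simp
  then show ?case
    by (simp add: ge2 hermite_fun_Suc_Suc algebra_simps del: hermite_poly.simps)
qed

definition blade_mult_coeff :: "nat set \<Rightarrow> nat set \<Rightarrow> nat set \<Rightarrow> real" where
  "blade_mult_coeff C A B = (if (A - B) \<union> (B - A) = C then blade_sign A B else 0)"

lemma clmul_eq_blade_mult_coeff:
  "clmul m x y C = (\<Sum>A\<in>Pow {1..m}. \<Sum>B\<in>Pow {1..m}. blade_mult_coeff C A B * x A * y B)"
  unfolding clmul_def blade_mult_coeff_def by (intro sum.cong) auto

lemma clmul_in_cl: "clmul m x y \<in> cl m"
proof -
  have "clmul m x y C = 0" if "\<not> C \<subseteq> {1..m}" for C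
    using that unfolding clmul_def by (intro sum.neutral ballI) auto
  then show ?thesis
    unfolding cl_def by blast
qed

lemma cl_one_in_cl: "cl_one \<in> cl m"
  unfolding cl_def cl_one_def by auto

lemma cl_prod_Nil [simp]: "cl_prod m g [] = cl_one"
  and cl_prod_Cons [simp]: "cl_prod m g (k # ks) = clmul m (g k) (cl_prod m g ks)"
  by (simp_all add: cl_prod_def)

lemma cl_prod_in_cl: "cl_prod m g ks \<in> cl m"
  by (cases ks) (simp_all add: cl_one_in_cl clmul_in_cl)

lemma cl_prod_cong: "(\<And>k. k \<in> set ks \<Longrightarrow> g k = h k) \<Longrightarrow> cl_prod m g ks = cl_prod m h ks"
  unfolding cl_prod_def by (intro foldr_cong) auto

lemma clmul_sum_left:
  "clmul m (\<lambda>C. \<Sum>s\<in>T. c s * f s C) z = (\<lambda>C. \<Sum>s\<in>T. c s * clmul m (f s) z C)"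
proof
  fix C
  let ?K = "blade_mult_coeff C"
  have "clmul m (\<lambda>C. \<Sum>s\<in>T. c s * f s C) z C =
      (\<Sum>A\<in>Pow {1..m}. \<Sum>B\<in>Pow {1..m}. \<Sum>s\<in>T. c s * (?K A B * f s A * z B))"
    unfolding clmul_eq_blade_mult_coeff by (simp add: sum_distrib_left sum_distrib_right mult_ac)
  also have "\<dots> = (\<Sum>s\<in>T. \<Sum>A\<in>Pow {1..m}. \<Sum>B\<in>Pow {1..m}. c s * (?K A B * f s A * z B))"
    by (simp only: sum.swap[of _ T])
  also have "\<dots> = (\<Sum>s\<in>T. c s * clmul m (f s) z C)"
    unfolding clmul_eq_blade_mult_coeff by (simp add: sum_distrib_left)
  finally show "clmul m (\<lambda>C. \<Sum>s\<in>T. c s * f s C) z C = (\<Sum>s\<in>T. c s * clmul m (f s) z C)" .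
qed

lemma clmul_sum_right:
  "clmul m z (\<lambda>C. \<Sum>s\<in>T. c s * f s C) = (\<lambda>C. \<Sum>s\<in>T. c s * clmul m z (f s) C)"
proof
  fix C
  let ?K = "blade_mult_coeff C"
  have "clmul m z (\<lambda>C. \<Sum>s\<in>T. c s * f s C) C =
      (\<Sum>A\<in>Pow {1..m}. \<Sum>B\<in>Pow {1..m}. \<Sum>s\<in>T. c s * (?K A B * z A * f s B))"
    unfolding clmul_eq_blade_mult_coeff by (simp add: sum_distrib_left sum_distrib_right mult_ac)
  also have "\<dots> = (\<Sum>s\<in>T. \<Sum>A\<in>Pow {1..m}. \<Sum>B\<in>Pow {1..m}. c s * (?K A B * z A * f s B))"
    by (simp only: sum.swap[of _ T])
  also have "\<dots> = (\<Sum>s\<in>T. c s * clmul m z (f s) C)"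
    unfolding clmul_eq_blade_mult_coeff by (simp add: sum_distrib_left)
  finally show "clmul m z (\<lambda>C. \<Sum>s\<in>T. c s * f s C) C = (\<Sum>s\<in>T. c s * clmul m z (f s) C)" .
qed

lemma clmul_add_left:
  "clmul m (\<lambda>C. a * x C + b * y C) z = (\<lambda>C. a * clmul m x z C + b * clmul m y z C)"
  using clmul_sum_left[of m "\<lambda>s. if s then a else b" "\<lambda>s. if s then x else y" UNIV z]
  by (simp add: UNIV_bool add.commute)

lemma clmul_add_right:
  "clmul m z (\<lambda>C. a * x C + b * y C) = (\<lambda>C. a * clmul m z x C + b * clmul m z y C)"
  using clmul_sum_right[of m z "\<lambda>s. if s then a else b" "\<lambda>s. if s then x else y" UNIV]
  by (simp add: UNIV_bool add.commute)

lemma sum_Pow_if_eq_cl: "x \<in> cl m \<Longrightarrow> (\<Sum>B\<in>Pow {1..m}. if B = C then x B else 0) = x C"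
  by (auto simp: cl_def)

lemma clmul_one_left: "x \<in> cl m \<Longrightarrow> clmul m cl_one x = x"
proof
  fix C assume x: "x \<in> cl m"
  have "clmul m cl_one x C = (\<Sum>B\<in>Pow {1..m}. blade_mult_coeff C {} B * x B)"
    unfolding clmul_eq_blade_mult_coeff cl_one_def
    by (simp add: if_distrib if_distribR cong: if_cong) (subst sum.swap, simp add: sum.delta)
  also have "\<dots> = (\<Sum>B\<in>Pow {1..m}. if B = C then x B else 0)"
    by (intro sum.cong) (auto simp: blade_mult_coeff_def blade_sign_def)
  also have "\<dots> = x C"
    using x by (rule sum_Pow_if_eq_cl)
  finally show "clmul m cl_one x C = x C" .
qed

lemma clmul_one_right: "x \<in> cl m \<Longrightarrow> clmul m x cl_one = x"
proof
  fix C assume x: "x \<in> cl m"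
  have "clmul m x cl_one C = (\<Sum>A\<in>Pow {1..m}. blade_mult_coeff C A {} * x A)"
    unfolding clmul_eq_blade_mult_coeff cl_one_def
    by (simp add: if_distrib if_distribR sum.delta' cong: if_cong)
  also have "\<dots> = (\<Sum>A\<in>Pow {1..m}. if A = C then x A else 0)"
    by (intro sum.cong) (auto simp: blade_mult_coeff_def blade_sign_def)
  also have "\<dots> = x C"
    using x by (rule sum_Pow_if_eq_cl)
  finally show "clmul m x cl_one C = x C" .
qed

lemma clmul_cl_scalar_left: "x \<in> cl m \<Longrightarrow> clmul m (cl_scalar r) x = (\<lambda>C. r * x C)"
proof -
  assume "x \<in> cl m"
  have "cl_scalar r = (\<lambda>C. r * cl_one C + 0 * cl_one C)"
    by (auto simp: cl_scalar_def cl_one_def)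
  then show ?thesis
    using \<open>x \<in> cl m\<close> by (simp only: clmul_add_left clmul_one_left) simp
qed

section \<open>Copies of the complex numbers inside Cl_{0,m}\<close>

definition cl_complex :: "clif \<Rightarrow> complex \<Rightarrow> clif" where
  "cl_complex a z = (\<lambda>C. Re z * cl_one C + Im z * a C)"

lemma cl_complex_in_cl: "a \<in> cl m \<Longrightarrow> cl_complex a z \<in> cl m"
  by (auto simp: cl_complex_def cl_def cl_one_def)

lemma cl_complex_1: "cl_complex a 1 = cl_one"
  by (simp add: cl_complex_def)

lemma cl_neg_eq_cl_complex: "cl_neg a = cl_complex a (- \<i>)"
  by (simp add: cl_neg_def cl_complex_def)

lemma clmul_cl_scalar_eq_cl_complex: "a \<in> cl m \<Longrightarrow> clmul m (cl_scalar t) a = cl_complex a (\<i> * t)"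
  by (simp add: clmul_cl_scalar_left cl_complex_def)

lemma clmul_cl_complex:
  assumes a_cl: "a \<in> cl m" and a_sq: "clmul m a a = cl_neg cl_one"
  shows "clmul m (cl_complex a z) (cl_complex a w) = cl_complex a (z * w)"
proof -
  have "clmul m a (cl_complex a w) = (\<lambda>C. Re w * a C - Im w * cl_one C)"
    unfolding cl_complex_def clmul_add_right using a_cl by (simp add: clmul_one_right a_sq cl_neg_def)
  then show ?thesis
    unfolding cl_complex_def[of a z] clmul_add_left clmul_one_left[OF cl_complex_in_cl[OF a_cl]]
    by (auto simp: cl_complex_def algebra_simps)
qed

lemma cl_pow_cl_complex:
  assumes "a \<in> cl m" and "clmul m a a = cl_neg cl_one"
  shows "cl_pow m (cl_complex a z) n = cl_complex a (z ^ n)"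
  by (induction n) (simp_all add: cl_complex_1 clmul_cl_complex assms)

lemma cl_exp_cl_complex:
  assumes "a \<in> cl m" and "clmul m a a = cl_neg cl_one"
  shows "cl_exp m (cl_complex a z) = cl_complex a (exp z)"
proof
  fix C
  have "(\<lambda>n. z ^ n /\<^sub>R fact n) sums exp z"
    by (rule exp_converges)
  then have "(\<lambda>n. Re (z ^ n) / fact n) sums Re (exp z)" "(\<lambda>n. Im (z ^ n) / fact n) sums Im (exp z)"
    by (auto dest: sums_Re sums_Im simp: divide_inverse mult.commute)
  then have "(\<lambda>n. Re (z ^ n) / fact n * cl_one C + Im (z ^ n) / fact n * a C) sums cl_complex a (exp z) C"
    unfolding cl_complex_def by (intro sums_add sums_mult2)
  moreover have "(\<lambda>n. cl_complex a (z ^ n) C / fact n) =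
      (\<lambda>n. Re (z ^ n) / fact n * cl_one C + Im (z ^ n) / fact n * a C)"
    by (simp add: cl_complex_def add_divide_distrib)
  ultimately have "(\<lambda>n. cl_complex a (z ^ n) C / fact n) sums cl_complex a (exp z) C"
    by simp
  then show "cl_exp m (cl_complex a z) C = cl_complex a (exp z) C"
    unfolding cl_exp_def cl_pow_cl_complex[OF assms] by (rule sums_unique[symmetric])
qed

definition re_or_im :: "bool \<Rightarrow> complex \<Rightarrow> real" where
  "re_or_im b z = (if b then Im z else Re z)"

text \<open>re_im_prod z J S is the coefficient of the ordered product of the i_k, k \<in> S, when
  \<Prod>k\<in>J. (Re (z k) + Im (z k) i_k) is multiplied out.\<close>

definition re_im_prod :: "(nat \<Rightarrow> complex) \<Rightarrow> nat set \<Rightarrow> nat set \<Rightarrow> real" where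
  "re_im_prod z J S = (\<Prod>k\<in>J. re_or_im (k \<in> S) (z k))"

definition cl_subprod :: "nat \<Rightarrow> (nat \<Rightarrow> clif) \<Rightarrow> nat set \<Rightarrow> nat list \<Rightarrow> clif" where
  "cl_subprod m i S ks = cl_prod m (\<lambda>k. if k \<in> S then i k else cl_one) ks"

lemma sum_Pow_insert:
  assumes "finite K" "k \<notin> K"
  shows "(\<Sum>S\<in>Pow (insert k K). f S) = (\<Sum>S\<in>Pow K. f S) + (\<Sum>S\<in>Pow K. f (insert k S))"
proof -
  have "(\<Sum>S\<in>Pow (insert k K). f S) = (\<Sum>S\<in>Pow K. f S) + (\<Sum>S\<in>insert k ` Pow K. f S)"
    unfolding Pow_insert using assms by (intro sum.union_disjoint) auto
  also have "(\<Sum>S\<in>insert k ` Pow K. f S) = (\<Sum>S\<in>Pow K. f (insert k S))"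
    using assms by (subst sum.reindex) (auto simp: inj_on_def)
  finally show ?thesis .
qed

lemma cl_prod_cl_complex_expand:
  assumes "distinct ks" and "\<And>k. k \<in> set ks \<Longrightarrow> i k \<in> cl m"
  shows "cl_prod m (\<lambda>k. cl_complex (i k) (z k)) ks =
    (\<lambda>C. \<Sum>S\<in>Pow (set ks). re_im_prod z (set ks) S * cl_subprod m i S ks C)"
  using assms
proof (induction ks)
  case Nil
  then show ?case by (simp add: re_im_prod_def cl_subprod_def)
next
  case (Cons k ks)
  let ?w = "re_im_prod z (set ks)" and ?G = "\<lambda>S. cl_subprod m i S ks"
  have k_notin: "k \<notin> set ks"
    using Cons.prems by auto
  have IH: "cl_prod m (\<lambda>k. cl_complex (i k) (z k)) ks = (\<lambda>C. \<Sum>S\<in>Pow (set ks). ?w S * ?G S C)"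
    using Cons by auto
  have weight_out: "re_im_prod z (insert k (set ks)) S = Re (z k) * ?w S"
    and weight_in: "re_im_prod z (insert k (set ks)) (insert k S) = Im (z k) * ?w S"
    if "S \<subseteq> set ks" for S
    using that k_notin by (auto simp: re_im_prod_def re_or_im_def intro!: prod.cong)
  have subprod_out: "cl_subprod m i S (k # ks) = ?G S" if "S \<subseteq> set ks" for S
    using that k_notin by (auto simp: cl_subprod_def clmul_one_left cl_prod_in_cl)
  have subprod_in: "cl_subprod m i (insert k S) (k # ks) = clmul m (i k) (?G S)" for S
  proof -
    have "cl_subprod m i (insert k S) ks = ?G S"
      unfolding cl_subprod_def using k_notin by (intro cl_prod_cong) auto
    then show ?thesis
      by (simp add: cl_subprod_def)
  qed
  have "cl_prod m (\<lambda>k. cl_complex (i k) (z k)) (k # ks) =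
      (\<lambda>C. Re (z k) * cl_prod m (\<lambda>k. cl_complex (i k) (z k)) ks C
         + Im (z k) * clmul m (i k) (cl_prod m (\<lambda>k. cl_complex (i k) (z k)) ks) C)"
    by (simp add: cl_complex_def[of "i k"] clmul_add_left clmul_one_left cl_prod_in_cl)
  also have "\<dots> = (\<lambda>C. \<Sum>S\<in>Pow (set ks). Re (z k) * ?w S * ?G S C + Im (z k) * ?w S * clmul m (i k) (?G S) C)"
    unfolding IH clmul_sum_right by (simp add: sum.distrib sum_distrib_left mult.assoc)
  also have "\<dots> = (\<lambda>C. \<Sum>S\<in>Pow (set (k # ks)). re_im_prod z (set (k # ks)) S * cl_subprod m i S (k # ks) C)"
    unfolding set_simps sum_Pow_insert[OF finite_set k_notin] sum.distrib
    by (intro ext arg_cong2[where f="(+)"] sum.cong refl)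
      (simp_all add: weight_out weight_in subprod_out subprod_in)
  finally show ?case .
qed

lemma re_im_prod_union:
  assumes "finite A" "finite B" "A \<inter> B = {}" "S \<subseteq> A" "T \<subseteq> B"
  shows "re_im_prod z (A \<union> B) (S \<union> T) = re_im_prod z A S * re_im_prod z B T"
proof -
  have "re_im_prod z A S = (\<Prod>k\<in>A. re_or_im (k \<in> S \<union> T) (z k))"
    and "re_im_prod z B T = (\<Prod>k\<in>B. re_or_im (k \<in> S \<union> T) (z k))"
    unfolding re_im_prod_def using assms by (auto simp: re_or_im_def intro!: prod.cong)
  then show ?thesis
    using assms by (simp add: re_im_prod_def prod.union_disjoint)
qed

lemma clmul_cl_prod_cl_complex_sandwich:
  assumes "distinct L" "distinct R" "set L \<inter> set R = {}" "\<And>k. k \<in> set L \<union> set R \<Longrightarrow> i k \<in> cl m"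
  shows "clmul m (cl_prod m (\<lambda>k. cl_complex (i k) (z k)) L)
      (clmul m (cl_scalar c) (cl_prod m (\<lambda>k. cl_complex (i k) (z k)) R)) =
    (\<lambda>C. \<Sum>S\<in>Pow (set L). \<Sum>T\<in>Pow (set R).
       (c * re_im_prod z (set L \<union> set R) (S \<union> T)) * clmul m (cl_subprod m i S L) (cl_subprod m i T R) C)"
proof -
  have left: "cl_prod m (\<lambda>k. cl_complex (i k) (z k)) L =
      (\<lambda>C. \<Sum>S\<in>Pow (set L). re_im_prod z (set L) S * cl_subprod m i S L C)"
    using assms by (simp add: cl_prod_cl_complex_expand)
  have right: "clmul m (cl_scalar c) (cl_prod m (\<lambda>k. cl_complex (i k) (z k)) R) =
      (\<lambda>C. \<Sum>T\<in>Pow (set R). (c * re_im_prod z (set R) T) * cl_subprod m i T R C)"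
    unfolding clmul_cl_scalar_left[OF cl_prod_in_cl]
    using assms by (simp add: cl_prod_cl_complex_expand sum_distrib_left mult.assoc)
  show ?thesis
    unfolding left right clmul_sum_left clmul_sum_right
    using assms by (auto simp: sum_distrib_left re_im_prod_union mult_ac intro!: sum.cong)
qed

section \<open>The geometric Fourier transform of Hermite functions\<close>

lemma re_or_im_of_real_mult: "re_or_im b (of_real r * z) = r * re_or_im b z"
  by (simp add: re_or_im_def)

lemma integrable_re_or_im: "integrable M f \<Longrightarrow> integrable M (\<lambda>x. re_or_im b (f x))"
  by (cases b) (simp_all add: re_or_im_def)

lemma integral_re_or_im: "integrable M f \<Longrightarrow> (\<integral>x. re_or_im b (f x) \<partial>M) = re_or_im b (integral\<^sup>L M f)"
  by (simp add: re_or_im_def)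

lemma integrable_hermite_fun_cis: "integrable lborel (\<lambda>t. hermite_fun k t *\<^sub>R cis (- (t * u)))"
  unfolding hermite_fun_eq_poly_gaussian by (rule integrable_poly_gaussian_cis)

lemma integral_hermite_fun_re_or_im:
  "(LINT t|lborel. re_or_im b (hermite_fun k t *\<^sub>R cis (- (t * u)))) = sqrt (2 * pi) * hermite_fun k u * re_or_im b ((- \<i>) ^ k)"
proof -
  have "(LINT t|lborel. re_or_im b (hermite_fun k t *\<^sub>R cis (- (t * u)))) =
      re_or_im b (poly_gaussian_fourier (hermite_poly k) u)"
    unfolding poly_gaussian_fourier_def hermite_fun_eq_poly_gaussian
    by (rule integral_re_or_im[OF integrable_poly_gaussian_cis])
  also have "\<dots> = sqrt (2 * pi) * hermite_fun k u * re_or_im b ((- \<i>) ^ k)"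
    unfolding poly_gaussian_fourier_hermite by (simp add: re_or_im_def)
  finally show ?thesis .
qed

lemma hermite_multi_mult_re_im_prod:
  "hermite_multi m j x * re_im_prod (\<lambda>k. cis (- (x k * u k))) {1..m} V =
    (\<Prod>k\<in>{1..m}. re_or_im (k \<in> V) (hermite_fun (j k) (x k) *\<^sub>R cis (- (x k * u k))))"
  by (simp add: hermite_multi_def re_im_prod_def scaleR_conv_of_real re_or_im_of_real_mult prod.distrib)

lemma product_sigma_finite_lborel: "product_sigma_finite (\<lambda>_. lborel)"
  by (simp add: product_sigma_finite_def lborel.sigma_finite_measure_axioms)

lemma integrable_hermite_multi_re_im_prod:
  "integrable (lebesgue_m m) (\<lambda>x. hermite_multi m j x * re_im_prod (\<lambda>k. cis (- (x k * u k))) {1..m} V)"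
  unfolding hermite_multi_mult_re_im_prod lebesgue_m_def
  by (intro product_sigma_finite.product_integrable_prod[OF product_sigma_finite_lborel]
      integrable_re_or_im integrable_hermite_fun_cis) simp

lemma powr_neg_half_mult_sqrt_power: "0 < x \<Longrightarrow> x powr (- real m / 2) * sqrt x ^ m = 1"
  by (simp add: powr_half_sqrt[symmetric] powr_realpow[symmetric] powr_powr powr_add[symmetric])

lemma integral_hermite_multi_re_im_prod:
  "(2 * pi) powr (- real m / 2) *
      (\<integral>x. hermite_multi m j x * re_im_prod (\<lambda>k. cis (- (x k * u k))) {1..m} V \<partial>lebesgue_m m)
    = hermite_multi m j u * re_im_prod (\<lambda>k. (- \<i>) ^ j k) {1..m} V"
proof -
  have "(\<integral>x. hermite_multi m j x * re_im_prod (\<lambda>k. cis (- (x k * u k))) {1..m} V \<partial>lebesgue_m m) =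
      (\<Prod>k\<in>{1..m}. sqrt (2 * pi) * hermite_fun (j k) (u k) * re_or_im (k \<in> V) ((- \<i>) ^ j k))"
    unfolding hermite_multi_mult_re_im_prod lebesgue_m_def
    by (subst product_sigma_finite.product_integral_prod[OF product_sigma_finite_lborel])
      (simp_all add: integrable_re_or_im integrable_hermite_fun_cis integral_hermite_fun_re_or_im)
  also have "\<dots> = sqrt (2 * pi) ^ m * (hermite_multi m j u * re_im_prod (\<lambda>k. (- \<i>) ^ j k) {1..m} V)"
    by (simp add: prod.distrib hermite_multi_def re_im_prod_def)
  finally show ?thesis
    using powr_neg_half_mult_sqrt_power[of "2 * pi" m] by (simp add: mult.assoc[symmetric])
qed

lemma cl_exp_kernel_eq_cl_complex:
  assumes "a \<in> cl m" and "clmul m a a = cl_neg cl_one"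
  shows "cl_exp m (clmul m (cl_scalar t) a) = cl_complex a (cis t)"
  using assms by (simp add: clmul_cl_scalar_eq_cl_complex cl_exp_cl_complex cis_conv_exp)

lemma geom_FT_cl_scalar:
  assumes i_cl: "\<And>k. k \<in> {1..m} \<Longrightarrow> i k \<in> cl m"
    and i_sq: "\<And>k. k \<in> {1..m} \<Longrightarrow> clmul m (i k) (i k) = cl_neg cl_one"
    and mu: "\<mu> \<le> m"
    and f_integrable: "\<And>V. integrable (lebesgue_m m) (\<lambda>x. f x * re_im_prod (\<lambda>k. cis (- (x k * u k))) {1..m} V)"
  shows "geom_FT m \<mu> i (\<lambda>x. cl_scalar (f x)) u =
    (\<lambda>C. \<Sum>S\<in>Pow {1..<\<mu>+1}. \<Sum>T\<in>Pow {\<mu>+1..<m+1}.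
       ((2 * pi) powr (- real m / 2) *
          (\<integral>x. f x * re_im_prod (\<lambda>k. cis (- (x k * u k))) {1..m} (S \<union> T) \<partial>lebesgue_m m))
       * clmul m (cl_subprod m i S [1..<\<mu>+1]) (cl_subprod m i T [\<mu>+1..<m+1]) C)"
proof -
  define L R where "L = [1..<\<mu>+1]" and "R = [\<mu>+1..<m+1]"
  have LR: "set L \<union> set R = {1..m}" "set L \<inter> set R = {}" "distinct L" "distinct R"
    using mu by (auto simp: L_def R_def)
  then have LR_sub: "set L \<subseteq> {1..m}" "set R \<subseteq> {1..m}"
    by auto
  let ?w = "\<lambda>x V. re_im_prod (\<lambda>k. cis (- (x k * u k))) {1..m} V"
  let ?M = "\<lambda>S T. clmul m (cl_subprod m i S L) (cl_subprod m i T R)"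
  have kernel: "cl_prod m (\<lambda>k. cl_exp m (clmul m (cl_scalar (- x k * u k)) (i k))) ks =
      cl_prod m (\<lambda>k. cl_complex (i k) (cis (- (x k * u k)))) ks" if "set ks \<subseteq> {1..m}" for x ks
    using that by (intro cl_prod_cong) (auto simp: cl_exp_kernel_eq_cl_complex i_cl i_sq)
  have integrand: "clmul m (cl_prod m (\<lambda>k. cl_exp m (clmul m (cl_scalar (- x k * u k)) (i k))) L)
        (clmul m (cl_scalar (f x)) (cl_prod m (\<lambda>k. cl_exp m (clmul m (cl_scalar (- x k * u k)) (i k))) R))
      = (\<lambda>C. \<Sum>S\<in>Pow (set L). \<Sum>T\<in>Pow (set R). (f x * ?w x (S \<union> T)) * ?M S T C)" for x
    unfolding kernel[OF LR_sub(1)] kernel[OF LR_sub(2)]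
    by (subst LR(1)[symmetric], rule clmul_cl_prod_cl_complex_sandwich) (use LR i_cl in auto)
  have "geom_FT m \<mu> i (\<lambda>x. cl_scalar (f x)) u = (\<lambda>C. (2 * pi) powr (- real m / 2) *
      (\<integral>x. (\<Sum>S\<in>Pow (set L). \<Sum>T\<in>Pow (set R). (f x * ?w x (S \<union> T)) * ?M S T C) \<partial>lebesgue_m m))"
    unfolding geom_FT_def cl_integral_def integrand[unfolded L_def R_def] L_def R_def ..
  also have "\<dots> = (\<lambda>C. \<Sum>S\<in>Pow (set L). \<Sum>T\<in>Pow (set R).
      ((2 * pi) powr (- real m / 2) * (\<integral>x. f x * ?w x (S \<union> T) \<partial>lebesgue_m m)) * ?M S T C)"
  proof
    fix C
    have "(\<integral>x. (\<Sum>S\<in>Pow (set L). \<Sum>T\<in>Pow (set R). (f x * ?w x (S \<union> T)) * ?M S T C) \<partial>lebesgue_m m) =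
        (\<Sum>S\<in>Pow (set L). \<Sum>T\<in>Pow (set R). (\<integral>x. f x * ?w x (S \<union> T) \<partial>lebesgue_m m) * ?M S T C)"
      using f_integrable by (simp add: Bochner_Integration.integral_sum Bochner_Integration.integrable_sum)
    then show "(2 * pi) powr (- real m / 2) *
        (\<integral>x. (\<Sum>S\<in>Pow (set L). \<Sum>T\<in>Pow (set R). (f x * ?w x (S \<union> T)) * ?M S T C) \<partial>lebesgue_m m) =
        (\<Sum>S\<in>Pow (set L). \<Sum>T\<in>Pow (set R).
          ((2 * pi) powr (- real m / 2) * (\<integral>x. f x * ?w x (S \<union> T) \<partial>lebesgue_m m)) * ?M S T C)"
      by (simp add: sum_distrib_left mult.assoc)
  qed
  finally show ?thesis
    by (simp only: L_def R_def set_upt)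
qed

lemma geom_FT_hermite_multi:
  assumes i_cl: "\<And>k. k \<in> {1..m} \<Longrightarrow> i k \<in> cl m"
    and i_sq: "\<And>k. k \<in> {1..m} \<Longrightarrow> clmul m (i k) (i k) = cl_neg cl_one"
    and mu: "\<mu> \<le> m"
  shows "geom_FT m \<mu> i (\<lambda>x. cl_scalar (hermite_multi m j x)) u =
    (\<lambda>C. \<Sum>S\<in>Pow {1..<\<mu>+1}. \<Sum>T\<in>Pow {\<mu>+1..<m+1}.
       (hermite_multi m j u * re_im_prod (\<lambda>k. (- \<i>) ^ j k) {1..m} (S \<union> T))
       * clmul m (cl_subprod m i S [1..<\<mu>+1]) (cl_subprod m i T [\<mu>+1..<m+1]) C)"
  using geom_FT_cl_scalar[OF i_cl i_sq mu integrable_hermite_multi_re_im_prod]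
  by (simp only: integral_hermite_multi_re_im_prod)

theorem theorem7:
  fixes m \<mu> :: nat and i :: "nat \<Rightarrow> clif" and j :: "nat \<Rightarrow> nat"
  assumes i_cl: "\<And>k. k \<in> {1..m} \<Longrightarrow> i k \<in> cl m"
    and i_sq: "\<And>k. k \<in> {1..m} \<Longrightarrow> clmul m (i k) (i k) = cl_neg cl_one"
    and mu: "\<mu> \<le> m"
  shows "geom_FT m \<mu> i (\<lambda>x. cl_scalar (hermite_multi m j x)) u =
    clmul m (cl_prod m (\<lambda>k. cl_pow m (cl_neg (i k)) (j k)) [1..<\<mu>+1])
      (clmul m (cl_scalar (hermite_multi m j u))
        (cl_prod m (\<lambda>k. cl_pow m (cl_neg (i k)) (j k)) [\<mu>+1..<m+1]))"
proof -
  let ?L = "[1..<\<mu>+1]" and ?R = "[\<mu>+1..<m+1]"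
  have LR: "set ?L \<subseteq> {1..m}" "set ?R \<subseteq> {1..m}" "set ?L \<inter> set ?R = {}"
    and split: "{1..<\<mu>+1} \<union> {\<mu>+1..<m+1} = {1..m}"
    using mu by auto
  have powers: "cl_prod m (\<lambda>k. cl_pow m (cl_neg (i k)) (j k)) ks =
      cl_prod m (\<lambda>k. cl_complex (i k) ((- \<i>) ^ j k)) ks" if "set ks \<subseteq> {1..m}" for ks
    using that by (intro cl_prod_cong) (auto simp: cl_neg_eq_cl_complex cl_pow_cl_complex i_cl i_sq)
  have "clmul m (cl_prod m (\<lambda>k. cl_pow m (cl_neg (i k)) (j k)) ?L)
      (clmul m (cl_scalar (hermite_multi m j u)) (cl_prod m (\<lambda>k. cl_pow m (cl_neg (i k)) (j k)) ?R)) =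
    (\<lambda>C. \<Sum>S\<in>Pow (set ?L). \<Sum>T\<in>Pow (set ?R).
       (hermite_multi m j u * re_im_prod (\<lambda>k. (- \<i>) ^ j k) (set ?L \<union> set ?R) (S \<union> T))
       * clmul m (cl_subprod m i S ?L) (cl_subprod m i T ?R) C)"
    unfolding powers[OF LR(1)] powers[OF LR(2)]
    by (rule clmul_cl_prod_cl_complex_sandwich) (use LR i_cl in auto)
  also have "\<dots> = geom_FT m \<mu> i (\<lambda>x. cl_scalar (hermite_multi m j x)) u"
    using geom_FT_hermite_multi[OF i_cl i_sq mu] by (simp only: set_upt split)
  finally show ?thesis
    by (rule sym)
qed

end
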